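(* Let $(G,\mu,[R])$ be a random-predicate $k$-player projection game, let $n\geqslant1$ and $i,p\in[k]$. Then $\mathbf{val}(\mathcal{T}^i_p(G)^{\otimes n})\geqslant\mathbf{val}(G^{\otimes n})^2$.
   Context: A random-predicate $k$-player game $(G,\mu,[R])$ has finite question sets $\mathcal{X}_j$, finite answer sets $\mathcal{A}_j$, a distribution $\mu$ on $\mathcal{X}_1\times\cdots\times\mathcal{X}_k$, and predicates $V_r$, $r\in[R]$; the verifier samples $q\sim\mu$ and $r\in[R]$ uniformly and independently, player $j$ answers $\alpha^j(q|_j)$ ($q|_j$ the $j$-th coordinate), and accepts iff $V_r(q,\text{answers})=1$. It is a projection game if for every $q$ and $r$ there are $D\geqslant1$ and maps $\sigma^j:\mathcal{A}_j\to[D]$ with $V_r(q,(a^1,\dots,a^k))=1$ iff $\sigma^j(a^j)=\sigma^{j'}(a^{j'})$ for all $j\neq j'$. In $G^{\otimes n}$, pairs $(q_m,r_m)$, $m\in[n]$, are sampled independently, player $j$ receives the $j$-th coordinates of $q_1,\dots,q_n$ and answers via a function $\mathcal{X}_j^n\to\mathcal{A}_j^n$, and the verifier accepts iff $V_{r_m}$ accepts coordinate $m$ for every $m$; $\mathbf{val}$ is the maximum acceptance probability. The $i$-link distribution $L_i(G)$: sample $v\sim\mu|_i$, then $q,q'$ independently from $\mu$ conditioned on $q|_i=q'|_i=v$. For $q=(x^1,\dots,x^k)$, $q'=(y^1,\dots,y^k)$, $\Pi^p((q,q'))=(y^1,\dots,y^{p-1},x^p,y^{p+1},\dots,y^k)$.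 The game $\mathcal{T}^i_p(G)$: the verifier samples $(q,q')\sim L_i(G)$ and $r\in[R]$ uniformly and independently, sends the coordinates of $\Pi^p((q,q'))$ to the players, accepts by default if $q\neq q'$, and if $q=q'$ accepts the answers $a$ iff $V_r(q,a)=1$. In $\mathcal{T}^i_p(G)^{\otimes n}$ the triples $(q_m,q'_m,r_m)$, $m\in[n]$, are sampled independently, player $j$ receives the $j$-th coordinates of $\Pi^p((q_m,q'_m))$, $m\in[n]$, and the verifier accepts iff it accepts in every coordinate. *)

theory Defs
  imports "HOL-Probability.Probability"
begin

text \<open>Conventions: players are indexed 0..<k; a question tuple is a list of length k
  (entry j = question to player j); an answer tuple is a list of length k.
  Predicates are indexed by r in {..<R}.\<close>

definition strategies ::
  "nat \<Rightarrow> nat \<Rightarrow> (nat \<Rightarrow> 'x set) \<Rightarrow> (nat \<Rightarrow> 'a set) \<Rightarrow> (nat \<Rightarrow> 'x list \<Rightarrow> 'a list) set" where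
  "strategies k n X A = {f. \<forall>j<k. \<forall>ys. length ys = n \<and> set ys \<subseteq> X j \<longrightarrow>
       length (f j ys) = n \<and> set (f j ys) \<subseteq> A j}"

text \<open>Generic n-fold parallel repetition: each round m samples s_m from D independently;
  player j receives que s_m j in round m; the verifier accepts iff acc s_m (answers of round m)
  holds for every round m.\<close>
definition rep_accept_prob ::
  "nat \<Rightarrow> nat \<Rightarrow> 's pmf \<Rightarrow> ('s \<Rightarrow> nat \<Rightarrow> 'x) \<Rightarrow> ('s \<Rightarrow> 'a list \<Rightarrow> bool)
     \<Rightarrow> (nat \<Rightarrow> 'x list \<Rightarrow> 'a list) \<Rightarrow> real" where
  "rep_accept_prob k n D que acc f =
     measure_pmf.prob (Pi_pmf {..<n} undefined (\<lambda>_. D))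
       {ss. \<forall>m<n. acc (ss m)
              (map (\<lambda>j. f j (map (\<lambda>m'. que (ss m') j) [0..<n]) ! m) [0..<k])}"

definition rep_val ::
  "nat \<Rightarrow> nat \<Rightarrow> (nat \<Rightarrow> 'x set) \<Rightarrow> (nat \<Rightarrow> 'a set) \<Rightarrow> 's pmf \<Rightarrow> ('s \<Rightarrow> nat \<Rightarrow> 'x)
     \<Rightarrow> ('s \<Rightarrow> 'a list \<Rightarrow> bool) \<Rightarrow> real" where
  "rep_val k n X A D que acc =
     (SUP f \<in> strategies k n X A. rep_accept_prob k n D que acc f)"

definition rp_game ::
  "nat \<Rightarrow> (nat \<Rightarrow> 'x set) \<Rightarrow> (nat \<Rightarrow> 'a set) \<Rightarrow> 'x list pmf \<Rightarrow> nat
     \<Rightarrow> (nat \<Rightarrow> 'x list \<Rightarrow> 'a list \<Rightarrow> bool) \<Rightarrow> bool" where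
  "rp_game k X A mu R V \<longleftrightarrow> k \<ge> 1 \<and> R \<ge> 1 \<and>
     (\<forall>j<k. finite (X j) \<and> finite (A j) \<and> A j \<noteq> {}) \<and>
     (\<forall>q\<in>set_pmf mu. length q = k \<and> (\<forall>j<k. q ! j \<in> X j))"

definition projection_game ::
  "nat \<Rightarrow> (nat \<Rightarrow> 'x set) \<Rightarrow> (nat \<Rightarrow> 'a set) \<Rightarrow> nat
     \<Rightarrow> (nat \<Rightarrow> 'x list \<Rightarrow> 'a list \<Rightarrow> bool) \<Rightarrow> bool" where
  "projection_game k X A R V \<longleftrightarrow>
     (\<forall>q. length q = k \<and> (\<forall>j<k. q ! j \<in> X j) \<longrightarrow> (\<forall>r<R.
        \<exists>D::nat. D \<ge> 1 \<and> (\<exists>\<sigma> :: nat \<Rightarrow> 'a \<Rightarrow> nat.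
          (\<forall>j<k. \<forall>a\<in>A j. \<sigma> j a \<in> {1..D}) \<and>
          (\<forall>a. length a = k \<and> (\<forall>j<k. a ! j \<in> A j) \<longrightarrow>
             (V r q a \<longleftrightarrow> (\<forall>j<k. \<forall>j'<k. j \<noteq> j' \<longrightarrow> \<sigma> j (a ! j) = \<sigma> j' (a ! j')))))))"

definition val_rep ::
  "nat \<Rightarrow> (nat \<Rightarrow> 'x set) \<Rightarrow> (nat \<Rightarrow> 'a set) \<Rightarrow> 'x list pmf \<Rightarrow> nat
     \<Rightarrow> (nat \<Rightarrow> 'x list \<Rightarrow> 'a list \<Rightarrow> bool) \<Rightarrow> nat \<Rightarrow> real" where
  "val_rep k X A mu R V n =
     rep_val k n X A (pair_pmf mu (pmf_of_set {..<R}))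
       (\<lambda>(q, r) j. q ! j) (\<lambda>(q, r) a. V r q a)"

definition link_pmf :: "'x list pmf \<Rightarrow> nat \<Rightarrow> ('x list \<times> 'x list) pmf" where
  "link_pmf mu i =
     bind_pmf (map_pmf (\<lambda>q. q ! i) mu)
       (\<lambda>v. pair_pmf (cond_pmf mu {q. q ! i = v}) (cond_pmf mu {q. q ! i = v}))"

definition Pi_swap :: "nat \<Rightarrow> 'x list \<times> 'x list \<Rightarrow> 'x list" where
  "Pi_swap p qq = (snd qq)[p := fst qq ! p]"

definition val_T_rep ::
  "nat \<Rightarrow> (nat \<Rightarrow> 'x set) \<Rightarrow> (nat \<Rightarrow> 'a set) \<Rightarrow> 'x list pmf \<Rightarrow> nat
     \<Rightarrow> (nat \<Rightarrow> 'x list \<Rightarrow> 'a list \<Rightarrow> bool) \<Rightarrow> nat \<Rightarrow> nat \<Rightarrow> nat \<Rightarrow> real" where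
  "val_T_rep k X A mu R V i p n =
     rep_val k n X A (pair_pmf (link_pmf mu i) (pmf_of_set {..<R}))
       (\<lambda>(qq, r) j. Pi_swap p qq ! j)
       (\<lambda>((q, q'), r) a. q \<noteq> q' \<or> V r q a)"

end

theory Submission
  imports Defs
begin

text \<open>
  Fix a strategy \<open>f\<close> for \<open>n\<close> rounds. In each round of \<open>G\<close> let \<open>z = (q\<^sub>i, r)\<close> and view the
  question tuple \<open>q\<close> as drawn from \<open>\<mu>\<close> conditioned on \<open>q\<^sub>i\<close>. A round of \<open>T\<^sup>i\<^sub>p(G)\<close> draws \<open>z\<close> once
  and then two conditionally independent tuples \<open>q, q'\<close>. If \<open>g(z\<^sub>1, ..., z\<^sub>n)\<close> is the
  probability that \<open>f\<close> wins \<open>G\<^sup>n\<close> given the \<open>z\<close>'s, then \<open>f\<close> wins \<open>G\<^sup>n\<close> with probability \<open>E g\<close>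
  and wins on both copies with probability \<open>E g\<^sup>2 \<ge> (E g)\<^sup>2\<close>.

  Whenever both copies are won, \<open>f\<close> also wins \<open>T\<^sup>n\<close>: player \<open>p\<close> answers as in the first copy,
  every other player as in the second, and player \<open>i\<close> sees the same questions in both. In a
  round with \<open>q = q'\<close> the projection labels of the first copy all agree with player \<open>i\<close>'s label,
  which agrees with all labels of the second copy, so the mixed answer is accepted. Taking
  suprema over \<open>f\<close> gives the claim.
\<close>

lemma measure_pmf_prob_bind_pmf:
  "measure_pmf.prob (bind_pmf M N) X = (\<integral>x. measure_pmf.prob (N x) X \<partial>M)"
proof -
  have "integrable M (\<lambda>x. measure_pmf.prob (N x) X)"
    by (rule measure_pmf.integrable_const_bound[where B=1]) auto
  have "emeasure (bind_pmf M N) X = (\<integral>\<^sup>+x. ennreal (measure_pmf.prob (N x) X) \<partial>M)"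
    by (subst emeasure_bind_pmf) (simp add: measure_pmf.emeasure_eq_measure)
  also have "\<dots> = ennreal (\<integral>x. measure_pmf.prob (N x) X \<partial>M)"
    by (rule nn_integral_eq_integral) (use \<open>integrable _ _\<close> in auto)
  finally show ?thesis
    by (simp add: measure_pmf.emeasure_eq_measure)
qed

lemma measure_pmf_prob_pair_pmf_Times:
  "measure_pmf.prob (pair_pmf M N) (X \<times> Y) = measure_pmf.prob M X * measure_pmf.prob N Y"
proof -
  have "measure_pmf.prob (pair_pmf M N) (X \<times> Y)
      = measure_pmf.prob (pair_pmf M N) ((X \<inter> set_pmf M) \<times> (Y \<inter> set_pmf N))"
    by (subst (1 2) measure_Int_set_pmf[symmetric]) (auto intro!: arg_cong2[where f=measure])
  also have "\<dots> = measure_pmf.prob M (X \<inter> set_pmf M) * measure_pmf.prob N (Y \<inter> set_pmf N)"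
    by (rule measure_pmf_prob_product) simp_all
  finally show ?thesis
    by (simp add: measure_Int_set_pmf)
qed

lemma cond_pmf_pair_pmf_Times:
  assumes "set_pmf M \<inter> S \<noteq> {}" and "set_pmf N \<inter> T \<noteq> {}"
  shows "cond_pmf (pair_pmf M N) (S \<times> T) = pair_pmf (cond_pmf M S) (cond_pmf N T)"
proof (rule pmf_eqI)
  fix x :: "'a \<times> 'b"
  have "set_pmf (pair_pmf M N) \<inter> S \<times> T \<noteq> {}"
    using assms by auto
  then show "pmf (cond_pmf (pair_pmf M N) (S \<times> T)) x = pmf (pair_pmf (cond_pmf M S) (cond_pmf N T)) x"
    using assms by (cases x) (simp add: pmf_cond pmf_pair measure_pmf_prob_pair_pmf_Times)
qed

lemma bind_cond_pmf_fibres: "bind_pmf (map_pmf h M) (\<lambda>v. cond_pmf M {s. h s = v}) = M"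
proof (rule bind_cond_pmf_cancel)
  fix v s
  assume "v \<in> set_pmf (map_pmf h M)" "s \<in> set_pmf M" "h s = v"
  then show "measure_pmf.prob M {s. h s = v} = measure_pmf.prob (map_pmf h M) {v. h s = v}"
    by (simp add: vimage_def eq_commute)
qed auto

lemma (in prob_space) power2_expectation_le:
  fixes f :: "'a \<Rightarrow> real"
  assumes "integrable M f" and "integrable M (\<lambda>x. (f x)\<^sup>2)"
  shows "(expectation f)\<^sup>2 \<le> expectation (\<lambda>x. (f x)\<^sup>2)"
  using variance_positive[of f] variance_eq[OF assms] by simp

lemma cSUP_power2_le:
  fixes a b :: "'i \<Rightarrow> real"
  assumes "S \<noteq> {}" and "bdd_above (b ` S)"
    and "\<And>f. f \<in> S \<Longrightarrow> 0 \<le> a f" and "\<And>f. f \<in> S \<Longrightarrow> (a f)\<^sup>2 \<le> b f"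
  shows "(SUP f\<in>S. a f)\<^sup>2 \<le> (SUP f\<in>S. b f)"
proof -
  have a_le: "a f \<le> sqrt (SUP f\<in>S. b f)" if "f \<in> S" for f
  proof -
    have "a f = sqrt ((a f)\<^sup>2)"
      using assms(3)[OF that] by simp
    also have "\<dots> \<le> sqrt (SUP f\<in>S. b f)"
      by (rule real_sqrt_le_mono) (rule order_trans[OF assms(4)[OF that] cSUP_upper[OF that assms(2)]])
    finally show ?thesis .
  qed
  obtain f0 where "f0 \<in> S"
    using assms(1) by blast
  have "bdd_above (a ` S)"
    using a_le by (rule bdd_aboveI2)
  then have "0 \<le> (SUP f\<in>S. a f)"
    using assms(3)[OF \<open>f0 \<in> S\<close>] cSUP_upper[OF \<open>f0 \<in> S\<close>, of a] by linarith
  moreover have "(SUP f\<in>S. a f) \<le> sqrt (SUP f\<in>S. b f)"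
    using assms(1) a_le by (rule cSUP_least)
  moreover have "0 \<le> (SUP f\<in>S. b f)"
    using assms(3,4)[OF \<open>f0 \<in> S\<close>] cSUP_upper[OF \<open>f0 \<in> S\<close> assms(2)]
    by (meson order_trans zero_le_power2)
  ultimately show ?thesis
    by (metis power_mono real_sqrt_pow2)
qed

lemma map_pmf_Pi_pmf_pair_pmf:
  assumes "finite I"
  shows "map_pmf (\<lambda>ss. (fst \<circ> ss, snd \<circ> ss)) (Pi_pmf I (d, d') (\<lambda>m. pair_pmf (P m) (Q m)))
           = pair_pmf (Pi_pmf I d P) (Pi_pmf I d' Q)"
proof -
  have "Pi_pmf I (d, d') (\<lambda>m. pair_pmf (P m) (Q m))
      = bind_pmf (Pi_pmf I d P) (\<lambda>f. Pi_pmf I (d, d') (\<lambda>m. bind_pmf (Q m) (\<lambda>b. return_pmf (f m, b))))"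
    unfolding pair_pmf_def by (rule Pi_pmf_bind[OF assms])
  also have "\<dots> = bind_pmf (Pi_pmf I d P) (\<lambda>f. bind_pmf (Pi_pmf I d' Q)
                    (\<lambda>g. Pi_pmf I (d, d') (\<lambda>m. return_pmf (f m, g m))))"
    by (subst Pi_pmf_bind[OF assms, where d'=d']) (rule refl)
  also have "\<dots> = bind_pmf (Pi_pmf I d P) (\<lambda>f. bind_pmf (Pi_pmf I d' Q)
                    (\<lambda>g. return_pmf (\<lambda>m. if m \<in> I then (f m, g m) else (d, d'))))"
    by (simp add: assms)
  finally have Pi_eq: "Pi_pmf I (d, d') (\<lambda>m. pair_pmf (P m) (Q m)) = \<dots>" .
  show ?thesis
    unfolding Pi_eq unfolding pair_pmf_def map_bind_pmf map_return_pmf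
  proof (intro bind_pmf_cong refl)
    fix f g
    assume "f \<in> set_pmf (Pi_pmf I d P)" and "g \<in> set_pmf (Pi_pmf I d' Q)"
    then have "\<forall>m. m \<notin> I \<longrightarrow> f m = d" and "\<forall>m. m \<notin> I \<longrightarrow> g m = d'"
      using set_Pi_pmf_subset[OF assms, of d P] set_Pi_pmf_subset[OF assms, of d' Q] by auto
    then show "return_pmf (fst \<circ> (\<lambda>m. if m \<in> I then (f m, g m) else (d, d')),
                           snd \<circ> (\<lambda>m. if m \<in> I then (f m, g m) else (d, d'))) = return_pmf (f, g)"
      by (auto simp: fun_eq_iff)
  qed
qed

lemma Pi_pmf_bind_prob_power2_le:
  assumes "finite I"
  shows "(measure_pmf.prob (Pi_pmf I d (\<lambda>m. bind_pmf (Z m) (K m))) W)\<^sup>2 \<le>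
    measure_pmf.prob (Pi_pmf I (d, d) (\<lambda>m. bind_pmf (Z m) (\<lambda>z. pair_pmf (K m z) (K m z))))
      {ss. fst \<circ> ss \<in> W \<and> snd \<circ> ss \<in> W}"
proof -
  let ?Zs = "Pi_pmf I undefined Z"
  define g where "g zs = measure_pmf.prob (Pi_pmf I d (\<lambda>m. K m (zs m))) W" for zs
  have "measure_pmf.prob (Pi_pmf I d (\<lambda>m. bind_pmf (Z m) (K m))) W = (\<integral>zs. g zs \<partial>?Zs)"
    by (simp add: Pi_pmf_bind[OF assms, where d'=undefined] measure_pmf_prob_bind_pmf g_def)
  moreover have "measure_pmf.prob (Pi_pmf I (d, d) (\<lambda>m. bind_pmf (Z m) (\<lambda>z. pair_pmf (K m z) (K m z))))
      {ss. fst \<circ> ss \<in> W \<and> snd \<circ> ss \<in> W} = (\<integral>zs. (g zs)\<^sup>2 \<partial>?Zs)"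
  proof -
    have "measure_pmf.prob (Pi_pmf I (d, d) (\<lambda>m. pair_pmf (K m (zs m)) (K m (zs m))))
        {ss. fst \<circ> ss \<in> W \<and> snd \<circ> ss \<in> W}
      = measure_pmf.prob (map_pmf (\<lambda>ss. (fst \<circ> ss, snd \<circ> ss))
          (Pi_pmf I (d, d) (\<lambda>m. pair_pmf (K m (zs m)) (K m (zs m))))) (W \<times> W)" for zs
      by (simp add: vimage_def)
    then have "measure_pmf.prob (Pi_pmf I (d, d) (\<lambda>m. pair_pmf (K m (zs m)) (K m (zs m))))
        {ss. fst \<circ> ss \<in> W \<and> snd \<circ> ss \<in> W} = (g zs)\<^sup>2" for zs
      by (simp add: map_pmf_Pi_pmf_pair_pmf[OF assms] measure_pmf_prob_pair_pmf_Times
                    g_def power2_eq_square)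
    then show ?thesis
      by (simp add: Pi_pmf_bind[OF assms, where d'=undefined] measure_pmf_prob_bind_pmf)
  qed
  moreover have "(\<integral>zs. g zs \<partial>?Zs)\<^sup>2 \<le> (\<integral>zs. (g zs)\<^sup>2 \<partial>?Zs)"
    by (rule measure_pmf.power2_expectation_le;
        rule measure_pmf.integrable_const_bound[where B=1]) (auto simp: g_def abs_square_le_1)
  ultimately show ?thesis
    by simp
qed

definition link_pmf_along :: "('s \<Rightarrow> 'v) \<Rightarrow> 's pmf \<Rightarrow> ('s \<times> 's) pmf" where
  "link_pmf_along h M =
     bind_pmf (map_pmf h M) (\<lambda>v. pair_pmf (cond_pmf M {s. h s = v}) (cond_pmf M {s. h s = v}))"

lemma link_pmf_eq_link_pmf_along: "link_pmf mu i = link_pmf_along (\<lambda>q. q ! i) mu"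
  by (simp add: link_pmf_def link_pmf_along_def)

lemma set_link_pmf_along:
  assumes "x \<in> set_pmf (link_pmf_along h M)"
  shows "fst x \<in> set_pmf M \<and> snd x \<in> set_pmf M \<and> h (fst x) = h (snd x)"
proof -
  from assms obtain v where "v \<in> h ` set_pmf M"
    and "x \<in> set_pmf (cond_pmf M {s. h s = v}) \<times> set_pmf (cond_pmf M {s. h s = v})"
    by (auto simp: link_pmf_along_def)
  moreover from \<open>v \<in> h ` set_pmf M\<close> have "set_pmf M \<inter> {s. h s = v} \<noteq> {}"
    by auto
  ultimately show ?thesis
    by auto
qed

lemma Pi_pmf_link_prob_power2_le:
  assumes "finite I"
  shows "(measure_pmf.prob (Pi_pmf I d (\<lambda>_. M)) W)\<^sup>2 \<le>
    measure_pmf.prob (Pi_pmf I (d, d) (\<lambda>_. link_pmf_along h M)) {ss. fst \<circ> ss \<in> W \<and> snd \<circ> ss \<in> W}"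
  using Pi_pmf_bind_prob_power2_le[OF assms, of d "\<lambda>_. map_pmf h M" "\<lambda>_ v. cond_pmf M {s. h s = v}" W]
  by (simp add: bind_cond_pmf_fibres link_pmf_along_def)

text \<open>Sampling the predicate index together with the linking coordinate turns a round of
  \<open>T\<^sup>i\<^sub>p(G)\<close> into the link of a round of \<open>G\<close> along \<open>(q\<^sub>i, r)\<close>.\<close>

lemma pair_link_pmf_along:
  "pair_pmf (link_pmf_along h M) U =
     map_pmf (\<lambda>((s, r), (s', _)). ((s, s'), r)) (link_pmf_along (\<lambda>(s, r). (h s, r)) (pair_pmf M U))"
proof -
  define C where "C v = cond_pmf M {s. h s = v}" for v
  define F :: "('a \<times> 'b) \<times> ('a \<times> 'b) \<Rightarrow> ('a \<times> 'a) \<times> 'b" where "F = (\<lambda>((s, r), (s', _)). ((s, s'), r))"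
  have cond_eq: "cond_pmf (pair_pmf M U) {x. (\<lambda>(s, r). (h s, r)) x = (v, r)} = map_pmf (\<lambda>s. (s, r)) (C v)"
    if "v \<in> h ` set_pmf M" and "r \<in> set_pmf U" for v r
  proof -
    have "{x. (\<lambda>(s, r). (h s, r)) x = (v, r)} = {s. h s = v} \<times> {r}"
      by auto
    moreover have "cond_pmf (pair_pmf M U) ({s. h s = v} \<times> {r}) = pair_pmf (C v) (cond_pmf U {r})"
      unfolding C_def by (rule cond_pmf_pair_pmf_Times) (use that in auto)
    moreover have "cond_pmf U {r} = return_pmf r"
      using that by (simp add: set_pmf_subset_singleton[symmetric])
    ultimately show ?thesis
      by (simp add: pair_return_pmf2)
  qed
  have "pair_pmf (link_pmf_along h M) U
      = bind_pmf (map_pmf h M) (\<lambda>v. bind_pmf U (\<lambda>r. map_pmf (\<lambda>ss. (ss, r)) (pair_pmf (C v) (C v))))"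
    unfolding link_pmf_along_def C_def pair_pmf_def[of _ U]
    by (simp add: bind_assoc_pmf bind_return_pmf map_pmf_def bind_commute_pmf[of U])
  also have "\<dots> = bind_pmf (pair_pmf (map_pmf h M) U)
      (\<lambda>(v, r). map_pmf F (pair_pmf (map_pmf (\<lambda>s. (s, r)) (C v)) (map_pmf (\<lambda>s. (s, r)) (C v))))"
  proof -
    have "map_pmf F (pair_pmf (map_pmf (\<lambda>s. (s, r)) X) (map_pmf (\<lambda>s. (s, r)) X))
        = map_pmf (\<lambda>ss. (ss, r)) (pair_pmf X X)" for X :: "'a pmf" and r
      by (simp add: map_pair[symmetric] pmf.map_comp F_def o_def split_beta)
    then show ?thesis
      by (simp add: pair_pmf_def[of "map_pmf h M" U] bind_assoc_pmf bind_return_pmf)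
  qed
  also have "\<dots> = map_pmf F (link_pmf_along (\<lambda>(s, r). (h s, r)) (pair_pmf M U))"
  proof -
    have "map_pmf (\<lambda>(s, r). (h s, r)) (pair_pmf M U) = pair_pmf (map_pmf h M) U"
      using map_pair[of h id M U] by (simp add: split_beta)
    then show ?thesis
      unfolding link_pmf_along_def map_bind_pmf by (intro bind_pmf_cong) (auto simp: cond_eq)
  qed
  finally show ?thesis
    by (simp add: F_def)
qed

definition tuple_of :: "nat \<Rightarrow> (nat \<Rightarrow> 'x set) \<Rightarrow> 'x list \<Rightarrow> bool" where
  "tuple_of k X q \<longleftrightarrow> length q = k \<and> (\<forall>j<k. q ! j \<in> X j)"

text \<open>In \<open>rep_answers k n f qs m\<close>, \<open>qs m' j\<close> is the question to player \<open>j\<close> in round \<open>m'\<close>;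
  the result is the answer tuple of round \<open>m\<close>.\<close>

definition rep_answers ::
  "nat \<Rightarrow> nat \<Rightarrow> (nat \<Rightarrow> 'x list \<Rightarrow> 'a list) \<Rightarrow> (nat \<Rightarrow> nat \<Rightarrow> 'x) \<Rightarrow> nat \<Rightarrow> 'a list" where
  "rep_answers k n f qs m = map (\<lambda>j. f j (map (\<lambda>m'. qs m' j) [0..<n]) ! m) [0..<k]"

definition rep_wins ::
  "nat \<Rightarrow> nat \<Rightarrow> ('s \<Rightarrow> nat \<Rightarrow> 'x) \<Rightarrow> ('s \<Rightarrow> 'a list \<Rightarrow> bool) \<Rightarrow> (nat \<Rightarrow> 'x list \<Rightarrow> 'a list)
     \<Rightarrow> (nat \<Rightarrow> 's) set" where
  "rep_wins k n que acc f = {ss. \<forall>m<n. acc (ss m) (rep_answers k n f (\<lambda>m'. que (ss m')) m)}"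

lemma rep_accept_prob_eq_rep_wins:
  "rep_accept_prob k n D que acc f = measure_pmf.prob (Pi_pmf {..<n} d (\<lambda>_. D)) (rep_wins k n que acc f)"
proof -
  let ?restrict = "\<lambda>ss m. if m < n then ss m else undefined"
  have restrict_column:
    "map (\<lambda>m'. que (?restrict ss m') j) [0..<n] = map (\<lambda>m'. que (ss m') j) [0..<n]" for ss j
    by (rule map_cong) auto
  have "Pi_pmf {..<n} undefined (\<lambda>_. D) = map_pmf ?restrict (Pi_pmf {..<n} d (\<lambda>_. D))"
    using Pi_pmf_default_swap[of "{..<n}" undefined d "\<lambda>_. D"] by simp
  moreover have "?restrict -` rep_wins k n que acc f = rep_wins k n que acc f"
    by (simp add: rep_wins_def rep_answers_def vimage_def restrict_column)
  ultimately show ?thesis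
    by (simp add: rep_accept_prob_def rep_wins_def rep_answers_def)
qed

lemma rep_accept_prob_map_pmf:
  "rep_accept_prob k n (map_pmf F D) que acc f = rep_accept_prob k n D (\<lambda>s. que (F s)) (\<lambda>s. acc (F s)) f"
proof -
  have "Pi_pmf {..<n} (F undefined) (\<lambda>_. map_pmf F D) = map_pmf ((\<circ>) F) (Pi_pmf {..<n} undefined (\<lambda>_. D))"
    by (simp add: Pi_pmf_map)
  moreover have "(\<circ>) F -` rep_wins k n que acc f = rep_wins k n (\<lambda>s. que (F s)) (\<lambda>s. acc (F s)) f"
    by (simp add: rep_wins_def vimage_def)
  ultimately show ?thesis
    by (simp add: rep_accept_prob_eq_rep_wins[where d="F undefined"] rep_accept_prob_eq_rep_wins[where d=undefined])
qed

lemma strategies_nonempty: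
  assumes "\<forall>j<k. A j \<noteq> {}"
  shows "strategies k n X A \<noteq> {}"
proof -
  have "(\<lambda>j _. replicate n (SOME a. a \<in> A j)) \<in> strategies k n X A"
    using assms by (auto simp: strategies_def some_in_eq)
  then show ?thesis
    by blast
qed

lemma tuple_of_rep_answers:
  assumes "f \<in> strategies k n X A" and "m < n" and "\<forall>m'<n. \<forall>j<k. qs m' j \<in> X j"
  shows "tuple_of k A (rep_answers k n f qs m)"
proof -
  have "f j (map (\<lambda>m'. qs m' j) [0..<n]) ! m \<in> A j" if "j < k" for j
  proof -
    have "length (map (\<lambda>m'. qs m' j) [0..<n]) = n \<and> set (map (\<lambda>m'. qs m' j) [0..<n]) \<subseteq> X j"
      using assms(3) that by auto
    then have "length (f j (map (\<lambda>m'. qs m' j) [0..<n])) = n \<and> set (f j (map (\<lambda>m'. qs m' j) [0..<n])) \<subseteq> A j"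
      using assms(1) that unfolding strategies_def by blast
    then show ?thesis
      using \<open>m < n\<close> by auto
  qed
  then show ?thesis
    by (simp add: tuple_of_def rep_answers_def)
qed

lemma rep_answers_nth_cong:
  assumes "j < k" and "\<forall>m'<n. qs m' j = qs' m' j"
  shows "rep_answers k n f qs m ! j = rep_answers k n f qs' m ! j"
proof -
  have column_eq: "map (\<lambda>m'. qs m' j) [0..<n] = map (\<lambda>m'. qs' m' j) [0..<n]"
    using assms by simp
  show ?thesis
    using assms by (simp add: rep_answers_def column_eq)
qed

lemma rep_answers_Pi_swap:
  assumes "\<forall>m'<n. length (Q' m') = k"
  shows "rep_answers k n f (\<lambda>m'. (!) (Pi_swap p (Q m', Q' m'))) m =
    (rep_answers k n f (\<lambda>m'. (!) (Q' m')) m)[p := rep_answers k n f (\<lambda>m'. (!) (Q m')) m ! p]"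
proof -
  have "map (\<lambda>m'. Pi_swap p (Q m', Q' m') ! j) [0..<n] =
      (if j = p then map (\<lambda>m'. Q m' ! j) [0..<n] else map (\<lambda>m'. Q' m' ! j) [0..<n])"
    if "j < k" for j
    using assms that by (auto simp: Pi_swap_def nth_list_update intro!: map_cong)
  then show ?thesis
    by (auto simp: rep_answers_def nth_list_update intro!: nth_equalityI)
qed

lemma projection_game_labelling:
  fixes A :: "nat \<Rightarrow> 'a set"
  assumes "projection_game k X A R V" and "tuple_of k X q" and "r < R"
  shows "\<exists>\<sigma> :: nat \<Rightarrow> 'a \<Rightarrow> nat. \<forall>a. tuple_of k A a \<longrightarrow>
    (V r q a \<longleftrightarrow> (\<forall>j<k. \<forall>j'<k. j \<noteq> j' \<longrightarrow> \<sigma> j (a ! j) = \<sigma> j' (a ! j')))"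
proof -
  have "\<exists>D::nat. D \<ge> 1 \<and> (\<exists>\<sigma> :: nat \<Rightarrow> 'a \<Rightarrow> nat. (\<forall>j<k. \<forall>a\<in>A j. \<sigma> j a \<in> {1..D}) \<and>
          (\<forall>a. length a = k \<and> (\<forall>j<k. a ! j \<in> A j) \<longrightarrow>
             (V r q a \<longleftrightarrow> (\<forall>j<k. \<forall>j'<k. j \<noteq> j' \<longrightarrow> \<sigma> j (a ! j) = \<sigma> j' (a ! j')))))"
    using assms unfolding projection_game_def tuple_of_def by simp
  then show ?thesis
    unfolding tuple_of_def by (elim exE conjE) (rule exI)
qed

lemma projection_game_accepts_mixed_answers:
  fixes A :: "nat \<Rightarrow> 'a set"
  assumes proj: "projection_game k X A R V" and "r < R" and "tuple_of k X q" and "i < k"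
    and b: "tuple_of k A b" "V r q b" and b': "tuple_of k A b'" "V r q b'" and "b ! i = b' ! i"
  shows "V r q (b'[p := b ! p])"
proof -
  obtain \<sigma> :: "nat \<Rightarrow> 'a \<Rightarrow> nat" where
    \<sigma>: "\<forall>a. tuple_of k A a \<longrightarrow> (V r q a \<longleftrightarrow> (\<forall>j<k. \<forall>j'<k. j \<noteq> j' \<longrightarrow> \<sigma> j (a ! j) = \<sigma> j' (a ! j')))"
    using projection_game_labelling[OF proj \<open>tuple_of k X q\<close> \<open>r < R\<close>] ..
  have agree: "\<sigma> j (a ! j) = \<sigma> i (a ! i)" if "tuple_of k A a" "V r q a" "j < k" for a j
  proof (cases "j = i")
    case False
    have "\<forall>j<k. \<forall>j'<k. j \<noteq> j' \<longrightarrow> \<sigma> j (a ! j) = \<sigma> j' (a ! j')"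
      using \<sigma> that(1,2) by blast
    then show ?thesis
      using False that(3) \<open>i < k\<close> by blast
  qed simp
  let ?a = "b'[p := b ! p]"
  have "?a ! j \<in> A j" if "j < k" for j
    using b(1) b'(1) that by (cases "j = p") (simp_all add: tuple_of_def)
  then have a_tuple: "tuple_of k A ?a"
    using b'(1) by (simp add: tuple_of_def)
  have common: "\<sigma> j (?a ! j) = \<sigma> i (b ! i)" if "j < k" for j
  proof (cases "j = p")
    case True
    with b'(1) that have "?a ! j = b ! p"
      by (simp add: tuple_of_def)
    then show ?thesis
      using agree[OF b that] True by simp
  next
    case False
    then show ?thesis
      using agree[OF b' that] \<open>b ! i = b' ! i\<close> by simp
  qed
  have "\<forall>j<k. \<forall>j'<k. j \<noteq> j' \<longrightarrow> \<sigma> j (?a ! j) = \<sigma> j' (?a ! j')"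
    by (simp add: common)
  then show ?thesis
    using \<sigma> a_tuple by blast
qed

lemma projection_game_swap_accepts:
  assumes proj: "projection_game k X A R V" and f: "f \<in> strategies k n X A" and "i < k"
    and Q: "\<And>m. m < n \<Longrightarrow> tuple_of k X (Q m)" and Q': "\<And>m. m < n \<Longrightarrow> tuple_of k X (Q' m)"
    and coord_i: "\<And>m. m < n \<Longrightarrow> Q m ! i = Q' m ! i" and r: "\<And>m. m < n \<Longrightarrow> r m < R"
    and win: "\<And>m. m < n \<Longrightarrow> V (r m) (Q m) (rep_answers k n f (\<lambda>m'. (!) (Q m')) m)"
    and win': "\<And>m. m < n \<Longrightarrow> V (r m) (Q' m) (rep_answers k n f (\<lambda>m'. (!) (Q' m')) m)"
    and "m < n" and "Q m = Q' m"
  shows "V (r m) (Q m) (rep_answers k n f (\<lambda>m'. (!) (Pi_swap p (Q m', Q' m'))) m)"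
proof -
  let ?b = "rep_answers k n f (\<lambda>m'. (!) (Q m')) m"
  let ?b' = "rep_answers k n f (\<lambda>m'. (!) (Q' m')) m"
  have b: "tuple_of k A ?b"
    by (rule tuple_of_rep_answers[OF f \<open>m < n\<close>]) (use Q in \<open>simp add: tuple_of_def\<close>)
  have b': "tuple_of k A ?b'"
    by (rule tuple_of_rep_answers[OF f \<open>m < n\<close>]) (use Q' in \<open>simp add: tuple_of_def\<close>)
  have "?b ! i = ?b' ! i"
    using coord_i by (intro rep_answers_nth_cong[OF \<open>i < k\<close>]) simp
  moreover have "V (r m) (Q m) ?b'"
    using win'[OF \<open>m < n\<close>] \<open>Q m = Q' m\<close> by simp
  ultimately have "V (r m) (Q m) (?b'[p := ?b ! p])"
    using projection_game_accepts_mixed_answers[OF proj r Q \<open>i < k\<close> b win b'] \<open>m < n\<close> by blast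
  moreover have "rep_answers k n f (\<lambda>m'. (!) (Pi_swap p (Q m', Q' m'))) m = ?b'[p := ?b ! p]"
    using Q' by (intro rep_answers_Pi_swap) (simp add: tuple_of_def)
  ultimately show ?thesis
    by simp
qed

lemma swap_game_wins_if_both_copies_win:
  fixes mu :: "'x list pmf"
  assumes game: "rp_game k X A mu R V" and proj: "projection_game k X A R V"
    and "i < k" and f: "f \<in> strategies k n X A"
    and ss: "ss \<in> set_pmf (Pi_pmf {..<n} d
              (\<lambda>_. link_pmf_along (\<lambda>(q, r). (q ! i, r)) (pair_pmf mu (pmf_of_set {..<R}))))"
    and wins: "fst \<circ> ss \<in> rep_wins k n (\<lambda>(q, r) j. q ! j) (\<lambda>(q, r) a. V r q a) f"
              "snd \<circ> ss \<in> rep_wins k n (\<lambda>(q, r) j. q ! j) (\<lambda>(q, r) a. V r q a) f"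
  shows "ss \<in> rep_wins k n (\<lambda>((q, r), (q', _)) j. Pi_swap p (q, q') ! j)
                           (\<lambda>((q, r), (q', _)) a. q \<noteq> q' \<or> V r q a) f"
proof -
  define Q where "Q m = fst (fst (ss m))" for m
  define Q' where "Q' m = fst (snd (ss m))" for m
  define r where "r m = snd (fst (ss m))" for m
  have "set_pmf (pmf_of_set {..<R}) = {..<R}"
    using game by (intro set_pmf_of_set) (auto simp: rp_game_def lessThan_empty_iff)
  then have support: "Q m \<in> set_pmf mu \<and> Q' m \<in> set_pmf mu \<and> Q m ! i = Q' m ! i \<and> r m < R
      \<and> snd (snd (ss m)) = r m" if "m < n" for m
  proof -
    have ss_m: "ss m \<in> set_pmf (link_pmf_along (\<lambda>(q, r). (q ! i, r)) (pair_pmf mu (pmf_of_set {..<R})))"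
      using set_Pi_pmf_subset'[of "{..<n}" d] ss that by (force simp: PiE_dflt_def)
    have "fst (ss m) \<in> set_pmf mu \<times> {..<R}" "snd (ss m) \<in> set_pmf mu \<times> {..<R}"
      "fst (fst (ss m)) ! i = fst (snd (ss m)) ! i" "snd (fst (ss m)) = snd (snd (ss m))"
      using set_link_pmf_along[OF ss_m] \<open>set_pmf (pmf_of_set {..<R}) = {..<R}\<close> by (auto simp: split_beta)
    then show ?thesis
      by (auto simp: Q_def Q'_def r_def)
  qed
  have tuple: "tuple_of k X q" if "q \<in> set_pmf mu" for q
    using game that by (simp add: rp_game_def tuple_of_def)
  have win: "V (r m) (Q m) (rep_answers k n f (\<lambda>m'. (!) (Q m')) m)" if "m < n" for m
    using wins(1) that by (simp add: rep_wins_def Q_def r_def split_beta)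
  have win': "V (r m) (Q' m) (rep_answers k n f (\<lambda>m'. (!) (Q' m')) m)" if "m < n" for m
  proof -
    have "V (snd (snd (ss m))) (Q' m) (rep_answers k n f (\<lambda>m'. (!) (Q' m')) m)"
      using wins(2) that by (simp add: rep_wins_def Q'_def split_beta)
    then show ?thesis
      using support[OF that] by simp
  qed
  have "Q m = Q' m \<longrightarrow> V (r m) (Q m) (rep_answers k n f (\<lambda>m'. (!) (Pi_swap p (Q m', Q' m'))) m)"
    if "m < n" for m
    using projection_game_swap_accepts[OF proj f \<open>i < k\<close> _ _ _ _ win win' that] support tuple by blast
  then show ?thesis
    by (simp add: rep_wins_def Q_def Q'_def r_def split_beta)
qed

lemma rep_accept_prob_power2_le_swap_game:
  fixes mu :: "'x list pmf" and f :: "nat \<Rightarrow> 'x list \<Rightarrow> 'a list"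
  assumes game: "rp_game k X A mu R V" and proj: "projection_game k X A R V"
    and "i < k" and f: "f \<in> strategies k n X A"
  shows "(rep_accept_prob k n (pair_pmf mu (pmf_of_set {..<R})) (\<lambda>(q, r) j. q ! j) (\<lambda>(q, r) a. V r q a) f)\<^sup>2
    \<le> rep_accept_prob k n (pair_pmf (link_pmf mu i) (pmf_of_set {..<R}))
       (\<lambda>(qq, r) j. Pi_swap p qq ! j) (\<lambda>((q, q'), r) a. q \<noteq> q' \<or> V r q a) f"
proof -
  define L where "L = link_pmf_along (\<lambda>(q, r). (q ! i, r)) (pair_pmf mu (pmf_of_set {..<R}))"
  define P where "P = Pi_pmf {..<n} (undefined, undefined) (\<lambda>_. L)"
  define WG where "WG = rep_wins k n (\<lambda>(q, r) j. q ! j) (\<lambda>(q, r) a. V r q a) f"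
  define WT :: "(nat \<Rightarrow> ('x list \<times> nat) \<times> 'x list \<times> nat) set"
    where "WT = rep_wins k n (\<lambda>((q, r), (q', _)) j. Pi_swap p (q, q') ! j)
    (\<lambda>((q, r), (q', _)) a. q \<noteq> q' \<or> V r q a) f"
  have "(measure_pmf.prob (Pi_pmf {..<n} undefined (\<lambda>_. pair_pmf mu (pmf_of_set {..<R}))) WG)\<^sup>2
      \<le> measure_pmf.prob P {ss. fst \<circ> ss \<in> WG \<and> snd \<circ> ss \<in> WG}"
    unfolding P_def L_def by (rule Pi_pmf_link_prob_power2_le) simp
  also have "\<dots> \<le> measure_pmf.prob P WT"
    using swap_game_wins_if_both_copies_win[OF game proj \<open>i < k\<close> f]
    by (intro measure_pmf.finite_measure_mono_AE) (auto simp: AE_measure_pmf_iff P_def L_def WG_def WT_def)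
  also have "\<dots> = rep_accept_prob k n (map_pmf (\<lambda>((q, r), (q', _)). ((q, q'), r)) L)
       (\<lambda>(qq, r) j. Pi_swap p qq ! j) (\<lambda>((q, q'), r) a. q \<noteq> q' \<or> V r q a) f"
    unfolding rep_accept_prob_map_pmf
    by (simp add: rep_accept_prob_eq_rep_wins[where d="(undefined, undefined)"] P_def WT_def case_prod_unfold)
  finally show ?thesis
    by (simp add: rep_accept_prob_eq_rep_wins[where D="pair_pmf mu _" and d=undefined] WG_def L_def
                  link_pmf_eq_link_pmf_along pair_link_pmf_along)
qed

theorem claim3p5:
  fixes k :: nat and X :: "nat \<Rightarrow> 'x set" and A :: "nat \<Rightarrow> 'a set"
    and mu :: "'x list pmf" and R :: nat and V :: "nat \<Rightarrow> 'x list \<Rightarrow> 'a list \<Rightarrow> bool"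
    and n i p :: nat
  assumes "rp_game k X A mu R V"
    and "projection_game k X A R V"
    and "n \<ge> 1" and "i < k" and "p < k"
  shows "val_T_rep k X A mu R V i p n \<ge> (val_rep k X A mu R V n)\<^sup>2"
proof -
  have "strategies k n X A \<noteq> {}"
    using assms(1) by (intro strategies_nonempty) (simp add: rp_game_def)
  then show ?thesis
    unfolding val_T_rep_def val_rep_def rep_val_def
  proof (rule cSUP_power2_le)
    show "bdd_above ((\<lambda>f. rep_accept_prob k n (pair_pmf (link_pmf mu i) (pmf_of_set {..<R}))
        (\<lambda>(qq, r) j. Pi_swap p qq ! j) (\<lambda>((q, q'), r) a. q \<noteq> q' \<or> V r q a) f) ` strategies k n X A)"
      by (intro bdd_aboveI[of _ 1]) (auto simp: rep_accept_prob_def)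
  next
    show "0 \<le> rep_accept_prob k n (pair_pmf mu (pmf_of_set {..<R})) (\<lambda>(q, r) j. q ! j)
        (\<lambda>(q, r) a. V r q a) f" for f
      by (simp add: rep_accept_prob_def)
  qed (rule rep_accept_prob_power2_le_swap_game[OF assms(1,2,4)])
qed

end
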